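(* Let $\beta_2,\beta_3,\delta_1,\delta_2,\delta_3,\mu_1,\mu_2,\eta,K_1,K_2,K_3$ be positive real numbers and consider the system \[ \begin{aligned} \dot{H} &= - \delta_1 H - \eta SH + \mu_1C\left(1-\frac{H}{K_1}\right), \\ \dot{S} &= \beta_2 S \left(1-\frac{S}{K_2}\right) - \delta_2 S - \eta S H + \mu_2 C \left(1-\frac{S}{K_2}\right), \\ \dot{C} &= \beta_3 C \left(1-\frac{C}{K_3}\right) - \delta_3 C + \eta S H . \end{aligned} \] Let $D=[0, K_1] \times [0, K_2] \times [0, \tilde{K}_3]$ with \[ \tilde{K}_3 := \frac{1}{2} \left( \frac{\beta_3 - \delta_3}{\beta_3} K_3 + \sqrt{\left(\frac{\beta_3-\delta_3}{\beta_3}\right)^2 K_3^2 + 8\frac{\eta}{\beta_3} K_1 K_2K_3} \right). \] Then: (a) Every fixed point of the system lying in $\mathbb{R}_{\ge 0}^3$ with at least one vanishing component is either $(0,0,0)$ or $\left(0, \frac{\beta_2-\delta_2}{\beta_2} K_2, 0 \right)$. (b) Every fixed point $(H^\star, S^\star, C^\star)$ in the interior of $D$ satisfies \[ \frac{\beta_3 - \delta_3}{\beta_3} K_3 < C^\star < \frac{\beta_3 - \delta_3 + \mu_1}{\beta_3} K_3 . \] (c) In each of the following cases there exists at least one fixed point in the interior of $D$: (i) $\beta_3 > \delta_3$; (ii) $\beta_3 = \delta_3$ and $\beta_2-\delta_2 > -\frac{\eta \mu_1 \mu_2 K_3}{\beta_3 \delta_1}$; (iii) $-\mu_1 < \beta_3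 - \delta_3 < 0$ and $\beta_2 - \delta_2 > -\frac{\beta_2\delta_1(\beta_3-\delta_3)}{\eta K_2 (\beta_3-\delta_3+\mu_1)}$.
   Context: The system is a population model (mycobiont host $H$, photobiont symbiont $S$, lichen complex $C$) in which all parameters are birth, death, formation rates and carrying capacities. A fixed point is a point of $\mathbb{R}^3$ at which the right-hand side of the system vanishes. *)

theory Defs
  imports "HOL-Analysis.Analysis"
begin

definition rhsH :: "real \<Rightarrow> real \<Rightarrow> real \<Rightarrow> real \<Rightarrow> real \<Rightarrow> real \<Rightarrow> real \<Rightarrow> real" where
  "rhsH d1 eta m1 K1 H S C = - d1 * H - eta * S * H + m1 * C * (1 - H / K1)"

definition rhsS :: "real \<Rightarrow> real \<Rightarrow> real \<Rightarrow> real \<Rightarrow> real \<Rightarrow> real \<Rightarrow> real \<Rightarrow> real \<Rightarrow> real" where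
  "rhsS b2 d2 eta m2 K2 H S C =
     b2 * S * (1 - S / K2) - d2 * S - eta * S * H + m2 * C * (1 - S / K2)"

definition rhsC :: "real \<Rightarrow> real \<Rightarrow> real \<Rightarrow> real \<Rightarrow> real \<Rightarrow> real \<Rightarrow> real \<Rightarrow> real" where
  "rhsC b3 d3 eta K3 H S C = b3 * C * (1 - C / K3) - d3 * C + eta * S * H"

definition fixed_point ::
  "real \<Rightarrow> real \<Rightarrow> real \<Rightarrow> real \<Rightarrow> real \<Rightarrow> real \<Rightarrow> real \<Rightarrow> real \<Rightarrow> real \<Rightarrow> real \<Rightarrow> real
   \<Rightarrow> real \<times> real \<times> real \<Rightarrow> bool" where
  "fixed_point b2 b3 d1 d2 d3 m1 m2 eta K1 K2 K3 p =
     (case p of (H, S, C) \<Rightarrow>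
        rhsH d1 eta m1 K1 H S C = 0 \<and>
        rhsS b2 d2 eta m2 K2 H S C = 0 \<and>
        rhsC b3 d3 eta K3 H S C = 0)"

definition K3tilde :: "real \<Rightarrow> real \<Rightarrow> real \<Rightarrow> real \<Rightarrow> real \<Rightarrow> real \<Rightarrow> real" where
  "K3tilde b3 d3 eta K1 K2 K3 =
     (1/2) * ((b3 - d3) / b3 * K3
              + sqrt (((b3 - d3) / b3)\<^sup>2 * K3\<^sup>2 + 8 * (eta / b3) * K1 * K2 * K3))"

definition domD :: "real \<Rightarrow> real \<Rightarrow> real \<Rightarrow> real \<Rightarrow> real \<Rightarrow> real \<Rightarrow> (real \<times> real \<times> real) set" where
  "domD b3 d3 eta K1 K2 K3 = {0..K1} \<times> {0..K2} \<times> {0..K3tilde b3 d3 eta K1 K2 K3}"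

end

theory Submission
  imports Defs
begin

text \<open>The C-equation says that at a fixed point \<open>eta S H = C \<rho>(C)\<close> with
  \<open>\<rho>(C) = b3 C / K3 - (b3 - d3)\<close>, and the H-equation bounds \<open>eta S H\<close> by \<open>m1 C\<close>;
  for a positive fixed point this gives \<open>0 < \<rho>(C) < m1\<close>, i.e. part (b). Conversely,
  for C in this window the H- and C-equations determine H and S uniquely, and the
  S-equation becomes, after clearing denominators, a scalar polynomial equation
  \<open>G(C) = 0\<close>. G is negative at the upper end of the window and, under each hypothesis
  of (c), positive at the lower end, so the intermediate value theorem produces a
  fixed point with positive coordinates. Such a point lies in the interior of D:
  the signs of the H- and S-equations give \<open>H < K1\<close> and \<open>S < K2\<close>, and
  \<open>C (C - (b3 - d3) K3 / b3) = K3 / b3 * eta S H < 2 eta K1 K2 K3 / b3\<close> puts C below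
  the positive root \<open>K3tilde\<close> of the corresponding quadratic.\<close>

lemma IVT2_strict:
  fixes f :: "'a::linear_continuum_topology \<Rightarrow> 'b::linorder_topology"
  assumes "a \<le> b" "continuous_on {a..b} f" "f b < y" "y < f a"
  shows "\<exists>x. a < x \<and> x < b \<and> f x = y"
proof -
  obtain x where "a \<le> x" "x \<le> b" "f x = y"
    using IVT2'[of f b y a] assms by force
  with assms show ?thesis
    by (metis order.not_eq_order_implies_strict order_less_irrefl)
qed

lemma less_quadratic_root:
  fixes a c x :: real
  assumes "x * (x - a) < c"
  shows "x < (a + sqrt (a\<^sup>2 + 4 * c)) / 2"
proof (rule ccontr)
  assume "\<not> ?thesis"
  then have "a\<^sup>2 + 4 * c \<le> (2 * x - a)\<^sup>2"
    by (intro sqrt_le_D) simp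
  with assms show False
    by (simp add: power2_eq_square algebra_simps)
qed

locale lichen =
  fixes b2 b3 d1 d2 d3 m1 m2 eta K1 K2 K3 :: real
  assumes pos: "b2 > 0" "b3 > 0" "d1 > 0" "d2 > 0" "d3 > 0" "m1 > 0" "m2 > 0"
    "eta > 0" "K1 > 0" "K2 > 0" "K3 > 0"
begin

abbreviation fixed :: "real \<times> real \<times> real \<Rightarrow> bool" where
  "fixed \<equiv> fixed_point b2 b3 d1 d2 d3 m1 m2 eta K1 K2 K3"

abbreviation D :: "(real \<times> real \<times> real) set" where
  "D \<equiv> domD b3 d3 eta K1 K2 K3"

lemma fixedD:
  assumes "fixed (H, S, C)"
  shows "- d1 * H - eta * S * H + m1 * C * (1 - H / K1) = 0"
    and "b2 * S * (1 - S / K2) - d2 * S - eta * S * H + m2 * C * (1 - S / K2) = 0"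
    and "b3 * C * (1 - C / K3) - d3 * C + eta * S * H = 0"
  using assms unfolding fixed_point_def rhsH_def rhsS_def rhsC_def by auto

lemma interior_D: "interior D = {0<..<K1} \<times> {0<..<K2} \<times> {0<..<K3tilde b3 d3 eta K1 K2 K3}"
  unfolding domD_def by (simp add: interior_Times)

lemma K3tilde_eq:
  "K3tilde b3 d3 eta K1 K2 K3 =
     ((b3 - d3) / b3 * K3 + sqrt (((b3 - d3) / b3 * K3)\<^sup>2 + 4 * (2 * eta * K1 * K2 * K3 / b3))) / 2"
  unfolding K3tilde_def power_mult_distrib by (simp add: field_simps)

lemma boundary_fixed_point:
  assumes "fixed (H, S, C)" and "H = 0 \<or> S = 0 \<or> C = 0"
  shows "(H, S, C) = (0, 0, 0) \<or> (H, S, C) = (0, (b2 - d2) / b2 * K2, 0)"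
proof -
  note eqs = fixedD[OF assms(1)]
  have "C = 0 \<Longrightarrow> S = 0 \<or> H = 0" and "S = 0 \<Longrightarrow> C = 0" and "C = 0 \<Longrightarrow> S = 0 \<Longrightarrow> H = 0"
    and "H = 0 \<Longrightarrow> C = 0"
    using eqs pos by auto
  then have "H = 0" "C = 0"
    using assms(2) by blast+
  with eqs(2) have "S * (b2 * (1 - S / K2) - d2) = 0"
    by (simp add: algebra_simps)
  moreover have "b2 * (1 - S / K2) - d2 = 0 \<Longrightarrow> S = (b2 - d2) / b2 * K2"
    using pos by (simp add: field_simps)
  ultimately have "S = 0 \<or> S = (b2 - d2) / b2 * K2"
    by auto
  with \<open>H = 0\<close> \<open>C = 0\<close> show ?thesis
    by auto
qed

definition \<rho> :: "real \<Rightarrow> real" where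
  "\<rho> C = b3 / K3 * C - (b3 - d3)"

definition \<pi> :: "real \<Rightarrow> real" where
  "\<pi> C = m1 - \<rho> C"

lemma rho_pos_iff: "0 < \<rho> C \<longleftrightarrow> (b3 - d3) / b3 * K3 < C"
  unfolding \<rho>_def using pos by (simp add: field_simps)

lemma pi_pos_iff: "0 < \<pi> C \<longleftrightarrow> C < (b3 - d3 + m1) / b3 * K3"
  unfolding \<pi>_def \<rho>_def using pos by (simp add: field_simps)

lemma fixed_point_formation_rate:
  assumes "fixed (H, S, C)"
  shows "eta * S * H = C * \<rho> C"
  using fixedD(3)[OF assms] unfolding \<rho>_def by (simp add: algebra_simps)

lemma fixed_point_H_balance:
  assumes "fixed (H, S, C)"
  shows "m1 * C * (1 - H / K1) = H * (d1 + eta * S)"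
  using fixedD(1)[OF assms] by (simp add: distrib_left mult.commute mult.left_commute)

lemma positive_fixed_point_rho_pi_pos:
  assumes fp: "fixed (H, S, C)" and "0 < H" "0 < S" "0 < C"
  shows "0 < \<rho> C" "0 < \<pi> C"
proof -
  have "0 < eta * S * H"
    using assms pos by simp
  then show "0 < \<rho> C"
    using \<open>0 < C\<close> by (simp add: fixed_point_formation_rate[OF fp] zero_less_mult_iff)
  have "C * \<rho> C = eta * S * H"
    using fixed_point_formation_rate[OF fp] ..
  also have "\<dots> < H * (d1 + eta * S)"
    using assms pos by (simp add: algebra_simps)
  also have "\<dots> = m1 * C * (1 - H / K1)"
    using fixed_point_H_balance[OF fp] ..
  also have "\<dots> < C * m1"
    using assms pos by simp
  finally have "C * \<rho> C < C * m1" .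
  then show "0 < \<pi> C"
    using \<open>0 < C\<close> unfolding \<pi>_def by simp
qed

lemma fixed_point_H_less_K1:
  assumes fp: "fixed (H, S, C)" and "0 < H" "0 \<le> S" "0 \<le> C"
  shows "H < K1"
proof -
  have "m1 * C * (1 - H / K1) = H * (d1 + eta * S)"
    using fixed_point_H_balance[OF fp] .
  also have "\<dots> > 0"
    using assms pos by (simp add: add_pos_nonneg)
  finally show ?thesis
    using assms pos by (auto simp: zero_less_mult_iff mult_less_0_iff)
qed

lemma fixed_point_S_less_K2:
  assumes fp: "fixed (H, S, C)" and "0 \<le> H" "0 < S" "0 \<le> C"
  shows "S < K2"
proof (rule ccontr)
  assume "\<not> S < K2"
  then have "1 - S / K2 \<le> 0"
    using pos by simp
  then have "b2 * S * (1 - S / K2) \<le> 0" "m2 * C * (1 - S / K2) \<le> 0"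
    using assms pos by (simp_all add: mult_nonneg_nonpos)
  moreover have "0 < d2 * S" "0 \<le> eta * S * H"
    using assms pos by simp_all
  ultimately show False
    using fixedD(2)[OF fp] by linarith
qed

lemma fixed_point_C_less_K3tilde:
  assumes fp: "fixed (H, S, C)" and "0 \<le> H" "H \<le> K1" "0 \<le> S" "S \<le> K2"
  shows "C < K3tilde b3 d3 eta K1 K2 K3"
proof -
  have "C * (C - (b3 - d3) / b3 * K3) = K3 / b3 * (C * \<rho> C)"
    unfolding \<rho>_def using pos by (simp add: field_simps)
  also have "\<dots> = K3 / b3 * (eta * (S * H))"
    by (metis fixed_point_formation_rate[OF fp] mult.assoc)
  also have "\<dots> \<le> K3 / b3 * (eta * (K2 * K1))"
    using assms pos by (intro mult_left_mono mult_mono) simp_all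
  also have "\<dots> < 2 * eta * K1 * K2 * K3 / b3"
    using pos by (simp add: field_simps)
  finally show ?thesis
    unfolding K3tilde_eq by (rule less_quadratic_root)
qed

lemma positive_fixed_point_in_interior:
  assumes fp: "fixed (H, S, C)" and "0 < H" "0 < S" "0 < C"
  shows "(H, S, C) \<in> interior D"
proof -
  have "H < K1" "S < K2"
    using assms fixed_point_H_less_K1 fixed_point_S_less_K2 by simp_all
  then have "C < K3tilde b3 d3 eta K1 K2 K3"
    using assms by (intro fixed_point_C_less_K3tilde) auto
  with assms \<open>H < K1\<close> \<open>S < K2\<close> show ?thesis
    unfolding interior_D by simp
qed

lemma interior_fixed_point_C_bounds:
  assumes "fixed (H, S, C)" "(H, S, C) \<in> interior D"
  shows "(b3 - d3) / b3 * K3 < C" "C < (b3 - d3 + m1) / b3 * K3"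
  using assms positive_fixed_point_rho_pi_pos[of H S C]
  by (simp_all add: interior_D rho_pos_iff pi_pos_iff)

definition \<delta> :: "real \<Rightarrow> real" where
  "\<delta> C = d1 + m1 * C / K1"

text \<open>For \<open>\<pi> C \<noteq> 0\<close> this is the unique point at height C where the H- and
  C-equations hold: \<open>H \<delta>(C) = C \<pi>(C)\<close> and \<open>eta S H = C \<rho>(C)\<close>.\<close>

definition nullcline_point :: "real \<Rightarrow> real \<times> real \<times> real" where
  "nullcline_point C = (C * \<pi> C / \<delta> C, \<rho> C * \<delta> C / (eta * \<pi> C), C)"

definition Q :: "real \<Rightarrow> real" where
  "Q C = (b2 - d2) * eta * \<pi> C * \<delta> C - b2 * \<rho> C * (\<delta> C)\<^sup>2 / K2
     - C * (eta * \<pi> C)\<^sup>2 - m2 * C * eta * \<pi> C * \<delta> C / K2"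

text \<open>\<open>G C\<close> is \<open>(eta \<pi>(C))\<^sup>2\<close> times the S-equation at \<open>nullcline_point C\<close>.\<close>

definition G :: "real \<Rightarrow> real" where
  "G C = \<rho> C * Q C + m2 * C * (eta * \<pi> C)\<^sup>2"

lemma delta_pos: "0 \<le> C \<Longrightarrow> 0 < \<delta> C"
  unfolding \<delta>_def using pos by (simp add: add_pos_nonneg)

lemma continuous_on_G: "continuous_on A G"
  unfolding G_def Q_def \<rho>_def \<pi>_def \<delta>_def divide_inverse by (auto intro!: continuous_intros)

lemma fixed_nullcline_point_iff:
  assumes "0 \<le> C" "\<pi> C \<noteq> 0"
  shows "fixed (nullcline_point C) \<longleftrightarrow> G C = 0"
proof -
  define H where "H = C * \<pi> C / \<delta> C"
  define S where "S = \<rho> C * \<delta> C / (eta * \<pi> C)"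
  have pt: "nullcline_point C = (H, S, C)"
    unfolding nullcline_point_def H_def S_def ..
  have "0 < \<delta> C"
    using assms delta_pos by simp
  then have H: "H * \<delta> C = C * \<pi> C" and S: "eta * \<pi> C * S = \<rho> C * \<delta> C"
    and SH: "eta * S * H = C * \<rho> C"
    unfolding H_def S_def using assms pos by (simp_all add: field_simps)
  have "rhsH d1 eta m1 K1 H S C = m1 * C - H * \<delta> C - eta * S * H"
    unfolding rhsH_def \<delta>_def by (simp add: algebra_simps)
  then have eqH: "rhsH d1 eta m1 K1 H S C = 0"
    unfolding H SH \<pi>_def by (simp add: algebra_simps)
  have eqC: "rhsC b3 d3 eta K3 H S C = 0"
    unfolding rhsC_def SH \<rho>_def using pos by (simp add: algebra_simps)
  have "(eta * \<pi> C)\<^sup>2 * rhsS b2 d2 eta m2 K2 H S C =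
      (b2 - d2) * (eta * \<pi> C) * (eta * \<pi> C * S) - b2 * (eta * \<pi> C * S)\<^sup>2 / K2
      - (eta * \<pi> C)\<^sup>2 * (eta * S * H) + m2 * C * (eta * \<pi> C)\<^sup>2
      - m2 * C * (eta * \<pi> C) * (eta * \<pi> C * S) / K2"
    unfolding rhsS_def by (simp add: algebra_simps power2_eq_square)
  also have "\<dots> = G C"
    unfolding S SH G_def Q_def by (simp add: algebra_simps power2_eq_square)
  finally have "(eta * \<pi> C)\<^sup>2 * rhsS b2 d2 eta m2 K2 H S C = G C" .
  then have "rhsS b2 d2 eta m2 K2 H S C = 0 \<longleftrightarrow> G C = 0"
    using assms pos by auto
  with eqH eqC show ?thesis
    unfolding pt fixed_point_def by simp
qed

lemma interior_fixed_point_of_G_root: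
  assumes "0 < C" "0 < \<rho> C" "0 < \<pi> C" "G C = 0"
  shows "\<exists>p. fixed p \<and> p \<in> interior D"
proof (intro exI conjI)
  show fp: "fixed (nullcline_point C)"
    using assms fixed_nullcline_point_iff by simp
  have "0 < \<delta> C"
    using assms delta_pos by simp
  with assms pos have "0 < C * \<pi> C / \<delta> C" "0 < \<rho> C * \<delta> C / (eta * \<pi> C)"
    by simp_all
  with fp \<open>0 < C\<close> show "nullcline_point C \<in> interior D"
    unfolding nullcline_point_def by (intro positive_fixed_point_in_interior) auto
qed

lemma G_neg_at_upper_bound:
  assumes "0 \<le> (b3 - d3 + m1) / b3 * K3"
  shows "G ((b3 - d3 + m1) / b3 * K3) < 0"
proof -
  define c where "c = (b3 - d3 + m1) / b3 * K3"
  have "\<pi> c = 0" "\<rho> c = m1"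
    unfolding c_def \<pi>_def \<rho>_def using pos by simp_all
  then have "G c = - (b2 * m1\<^sup>2 * (\<delta> c)\<^sup>2 / K2)"
    unfolding G_def Q_def by (simp add: power2_eq_square)
  moreover have "0 < \<delta> c"
    using assms delta_pos unfolding c_def by simp
  ultimately show ?thesis
    unfolding c_def using pos by simp
qed

lemma interior_fixed_point_of_G_pos:
  assumes "0 \<le> a" "(b3 - d3) / b3 * K3 \<le> a" "a < (b3 - d3 + m1) / b3 * K3" "0 < G a"
  shows "\<exists>p. fixed p \<and> p \<in> interior D"
proof -
  define c where "c = (b3 - d3 + m1) / b3 * K3"
  have "G c < 0"
    unfolding c_def using assms by (intro G_neg_at_upper_bound) simp
  then obtain C where "a < C" "C < c" "G C = 0"
    using IVT2_strict[of a c G 0] continuous_on_G assms unfolding c_def by auto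
  with assms show ?thesis
    unfolding c_def by (intro interior_fixed_point_of_G_root) (simp_all add: rho_pos_iff pi_pos_iff)
qed

lemma interior_fixed_point_if_b3_gt_d3:
  assumes "d3 < b3"
  shows "\<exists>p. fixed p \<and> p \<in> interior D"
proof (rule interior_fixed_point_of_G_pos)
  define c where "c = (b3 - d3) / b3 * K3"
  show "0 \<le> c" "c < (b3 - d3 + m1) / b3 * K3"
    unfolding c_def using assms pos by (simp_all add: divide_strict_right_mono)
  have "\<rho> c = 0" "\<pi> c = m1"
    unfolding c_def \<pi>_def \<rho>_def using pos by simp_all
  then have "G c = m2 * c * (eta * m1)\<^sup>2"
    unfolding G_def by simp
  then show "0 < G c"
    unfolding c_def using assms pos by simp
qed simp

lemma interior_fixed_point_if_b3_eq_d3: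
  assumes "b3 = d3" and "- (eta * m1 * m2 * K3) / (b3 * d1) < b2 - d2"
  shows "\<exists>p. fixed p \<and> p \<in> interior D"
proof -
  \<comment> \<open>Here \<open>G 0 = 0\<close> is a spurious root, so the sign change is sought in \<open>G C / C\<close>.\<close>
  define F where "F C = b3 / K3 * Q C + m2 * (eta * \<pi> C)\<^sup>2" for C
  define c where "c = (b3 - d3 + m1) / b3 * K3"
  have rho: "\<rho> C = b3 / K3 * C" for C
    unfolding \<rho>_def using assms by simp
  have G_eq: "G C = C * F C" for C
    unfolding G_def F_def rho by (simp add: algebra_simps)
  have "0 < c"
    unfolding c_def using assms pos by simp
  have "F 0 = eta * m1 / K3 * (b3 * d1 * (b2 - d2) + eta * m1 * m2 * K3)"
    unfolding F_def Q_def rho \<pi>_def \<delta>_def using assms pos by (simp add: field_simps power2_eq_square)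
  moreover have "0 < b3 * d1 * (b2 - d2) + eta * m1 * m2 * K3"
    using assms pos by (simp add: field_simps)
  ultimately have "0 < F 0"
    using pos by simp
  moreover have "G c < 0"
    unfolding c_def using \<open>0 < c\<close> by (intro G_neg_at_upper_bound) (simp add: c_def)
  with \<open>0 < c\<close> have "F c < 0"
    by (simp add: G_eq mult_less_0_iff)
  moreover have "continuous_on {0..c} F"
    unfolding F_def Q_def \<pi>_def \<rho>_def \<delta>_def divide_inverse by (auto intro!: continuous_intros)
  ultimately obtain C where "0 < C" "C < c" "F C = 0"
    using IVT2_strict[of 0 c F 0] \<open>0 < c\<close> by auto
  then show ?thesis
    unfolding c_def by (intro interior_fixed_point_of_G_root) (auto simp: G_eq rho pi_pos_iff pos)
qed

lemma interior_fixed_point_if_b3_lt_d3: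
  assumes "- m1 < b3 - d3" "b3 - d3 < 0"
    and "- (b2 * d1 * (b3 - d3)) / (eta * K2 * (b3 - d3 + m1)) < b2 - d2"
  shows "\<exists>p. fixed p \<and> p \<in> interior D"
proof (rule interior_fixed_point_of_G_pos)
  show "(b3 - d3) / b3 * K3 \<le> 0"
    using assms pos by (intro mult_nonpos_nonneg divide_nonpos_pos) simp_all
  show "0 < (b3 - d3 + m1) / b3 * K3"
    using assms pos by simp
  have "0 < eta * K2 * (b3 - d3 + m1)"
    using assms pos by simp
  then have "b2 * d1 * (d3 - b3) < (b2 - d2) * (eta * K2 * (b3 - d3 + m1))"
    using assms(3) by (simp add: field_simps)
  moreover have "Q 0 = d1 / K2 * ((b2 - d2) * (eta * K2 * (b3 - d3 + m1)) - b2 * d1 * (d3 - b3))"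
    unfolding Q_def \<pi>_def \<rho>_def \<delta>_def using pos by (simp add: field_simps power2_eq_square)
  ultimately have "0 < Q 0"
    using pos by simp
  moreover have "\<rho> 0 = d3 - b3"
    unfolding \<rho>_def by simp
  ultimately show "0 < G 0"
    unfolding G_def using assms by simp
qed simp

end

theorem theorem2:
  fixes b2 b3 d1 d2 d3 m1 m2 eta K1 K2 K3 :: real
  assumes pos: "b2 > 0" "b3 > 0" "d1 > 0" "d2 > 0" "d3 > 0" "m1 > 0" "m2 > 0"
               "eta > 0" "K1 > 0" "K2 > 0" "K3 > 0"
  shows
    "(\<forall>H S C. fixed_point b2 b3 d1 d2 d3 m1 m2 eta K1 K2 K3 (H, S, C)
        \<and> H \<ge> 0 \<and> S \<ge> 0 \<and> C \<ge> 0 \<and> (H = 0 \<or> S = 0 \<or> C = 0)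
        \<longrightarrow> (H, S, C) = (0, 0, 0) \<or> (H, S, C) = (0, (b2 - d2) / b2 * K2, 0))
   \<and> (\<forall>H S C. fixed_point b2 b3 d1 d2 d3 m1 m2 eta K1 K2 K3 (H, S, C)
        \<and> (H, S, C) \<in> interior (domD b3 d3 eta K1 K2 K3)
        \<longrightarrow> (b3 - d3) / b3 * K3 < C \<and> C < (b3 - d3 + m1) / b3 * K3)
   \<and> ((b3 > d3
        \<or> (b3 = d3 \<and> b2 - d2 > - (eta * m1 * m2 * K3) / (b3 * d1))
        \<or> (- m1 < b3 - d3 \<and> b3 - d3 < 0 \<and>
            b2 - d2 > - (b2 * d1 * (b3 - d3)) / (eta * K2 * (b3 - d3 + m1))))
       \<longrightarrow> (\<exists>p. fixed_point b2 b3 d1 d2 d3 m1 m2 eta K1 K2 K3 p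
                 \<and> p \<in> interior (domD b3 d3 eta K1 K2 K3)))"
proof -
  interpret lichen b2 b3 d1 d2 d3 m1 m2 eta K1 K2 K3
    using pos by unfold_locales
  show ?thesis
    using boundary_fixed_point interior_fixed_point_C_bounds interior_fixed_point_if_b3_gt_d3
      interior_fixed_point_if_b3_eq_d3 interior_fixed_point_if_b3_lt_d3
    by blast
qed

end
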